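(* Let $S^2\subset\mathbb{R}^3$ be the unit sphere with the round metric and area form, let $H:S^2\to\mathbb{R}$ be smooth and let $X_H$ be its Hamiltonian vector field. A point $s\in S^2$ is a conformal point of $X_H$ if and only if the second jet $j^2H(s)$ equals the second jet at $s$ of the restriction to $S^2$ of some affine function $d+ax+by+cz$ on $\mathbb{R}^3$ (a first spherical harmonic plus a constant).
   Context: A point $s$ is a conformal point of a vector field $X$ on the Riemannian surface $S^2$ if the linearization $\nabla X(s):T_sS^2\to T_sS^2$ (Levi-Civita covariant derivative) is an infinitesimal similarity, i.e. of the form $\lambda\,\mathrm{Id}+\mu J$ where $J$ is rotation by $90^\circ$; equivalently, the infinitesimal area-preserving map generated by $X$ has derivative at $s$ sending circles to congruent circles. *)

theory Defs
  imports "HOL-Analysis.Analysis"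
begin

text \<open>Extrinsic model of the round unit sphere S^2 = sphere 0 1 in R^3 (type real^3).\<close>

definition tangent_space :: "real^3 \<Rightarrow> (real^3) set" where
  "tangent_space s = {v. s \<bullet> v = 0}"

fun iter_dd :: "(real^3) list \<Rightarrow> (real^3 \<Rightarrow> 'b::real_normed_vector) \<Rightarrow> real^3 \<Rightarrow> 'b" where
  "iter_dd [] f = f"
| "iter_dd (v # vs) f = (\<lambda>x. frechet_derivative (iter_dd vs f) (at x) v)"

definition smooth_on :: "(real^3) set \<Rightarrow> (real^3 \<Rightarrow> real) \<Rightarrow> bool" where
  "smooth_on U f \<longleftrightarrow> open U \<and> (\<forall>vs. iter_dd vs f differentiable_on U)"

text \<open>Standard chart of S^2 centred at s: u (in the tangent plane near 0) maps to (s+u)/|s+u|.\<close>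
definition sphere_chart :: "real^3 \<Rightarrow> real^3 \<Rightarrow> real^3" where
  "sphere_chart s u = (1 / norm (s + u)) *\<^sub>R (s + u)"

text \<open>Equality of second jets at s of (the restrictions to S^2 of) H and G, computed in the chart.\<close>
definition jet2_eq :: "real^3 \<Rightarrow> (real^3 \<Rightarrow> real) \<Rightarrow> (real^3 \<Rightarrow> real) \<Rightarrow> bool" where
  "jet2_eq s H G \<longleftrightarrow>
     (let f = H \<circ> sphere_chart s; g = G \<circ> sphere_chart s in
        f 0 = g 0
      \<and> (\<forall>v\<in>tangent_space s. iter_dd [v] f 0 = iter_dd [v] g 0)
      \<and> (\<forall>v\<in>tangent_space s. \<forall>w\<in>tangent_space s. iter_dd [w, v] f 0 = iter_dd [w, v] g 0))"

text \<open>Hamiltonian vector field w.r.t. the area form omega_s(u,v) = s . (u x v):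
  the unique tangent X with omega_s(X, v) = dH_s(v) for all tangent v.\<close>
definition hamiltonian_vf :: "(real^3 \<Rightarrow> real) \<Rightarrow> real^3 \<Rightarrow> real^3" where
  "hamiltonian_vf H s = (THE X. X \<in> tangent_space s \<and>
      (\<forall>v\<in>tangent_space s. s \<bullet> cross3 X v = frechet_derivative H (at s) v))"

text \<open>Levi-Civita covariant derivative of a tangent vector field X on S^2 at s in direction v:
  tangential projection of the ambient derivative of X along the sphere (computed via the chart,
  whose differential at 0 is the identity on the tangent plane).\<close>
definition covariant_deriv :: "(real^3 \<Rightarrow> real^3) \<Rightarrow> real^3 \<Rightarrow> real^3 \<Rightarrow> real^3" where
  "covariant_deriv X s v =
     (let d = frechet_derivative (X \<circ> sphere_chart s) (at 0) v in d - (s \<bullet> d) *\<^sub>R s)"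

text \<open>Conformal point: nabla X(s) = lambda Id + mu J on T_s S^2, with J v = s x v (rotation by 90 degrees).\<close>
definition conformal_point :: "(real^3 \<Rightarrow> real^3) \<Rightarrow> real^3 \<Rightarrow> bool" where
  "conformal_point X s \<longleftrightarrow>
     (\<exists>l m::real. \<forall>v\<in>tangent_space s. covariant_deriv X s v = l *\<^sub>R v + m *\<^sub>R cross3 s v)"

end

theory Submission
  imports Defs
begin

(* On the sphere the Hamiltonian field is X_H(p) = grad H(p) x p, so for v tangent at s
   the covariant derivative is Hess H(s) v x s + (grad H(s) . s) (s x v). Composition with
   J = s x _ preserves the maps of the form l Id + m J, hence s is a conformal point iff the
   tangential part of Hess H(s) is of that form; being symmetric (Schwarz) while J is skew,
   it must then be k Id. In the chart u |-> (s + u)/|s + u| the 2-jet of H at s consists of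
   H(s), grad H(s) on T_s and Hess H(s) - (grad H(s) . s) Id on T_s; for d + L . x these are
   d + L . s, L on T_s and -(L . s) Id. So a matching affine function exists iff
   Hess H(s) = k Id on T_s, namely L = grad H(s) - k s. *)

section \<open>Symmetry of second derivatives\<close>

lemma has_real_derivative_along_line:
  fixes F :: "'a::real_normed_vector \<Rightarrow> real"
  assumes "F differentiable at (a + r *\<^sub>R w)"
  shows "((\<lambda>r. F (a + r *\<^sub>R w)) has_real_derivative frechet_derivative F (at (a + r *\<^sub>R w)) w) (at r)"
proof -
  let ?D = "frechet_derivative F (at (a + r *\<^sub>R w))"
  have D: "(F has_derivative ?D) (at (a + r *\<^sub>R w))"
    using assms frechet_derivative_works by blast
  have line: "((\<lambda>r. a + r *\<^sub>R w) has_derivative (\<lambda>r. r *\<^sub>R w)) (at r)"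
    by (auto intro!: derivative_eq_intros)
  have "((\<lambda>r. F (a + r *\<^sub>R w)) has_derivative (\<lambda>r. ?D (r *\<^sub>R w))) (at r)"
    using has_derivative_compose[OF line D] by simp
  moreover have "(\<lambda>r. ?D (r *\<^sub>R w)) = (*) (?D w)"
    using has_derivative_linear[OF D] by (simp add: linear_cmul fun_eq_iff)
  ultimately show ?thesis
    by (simp add: has_field_derivative_def)
qed

lemma second_difference_bound:
  fixes F :: "'a::real_normed_vector \<Rightarrow> real"
  assumes "0 < t"
    and differentiable: "\<And>r. 0 \<le> r \<Longrightarrow> r \<le> t \<Longrightarrow>
           F differentiable at (s + t *\<^sub>R v + r *\<^sub>R w) \<and> F differentiable at (s + r *\<^sub>R w)"
    and bound: "\<And>r. 0 \<le> r \<Longrightarrow> r \<le> t \<Longrightarrow>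
           \<bar>frechet_derivative F (at (s + t *\<^sub>R v + r *\<^sub>R w)) w
              - frechet_derivative F (at (s + r *\<^sub>R w)) w - c\<bar> \<le> b"
  shows "\<bar>F (s + t *\<^sub>R v + t *\<^sub>R w) - F (s + t *\<^sub>R v) - F (s + t *\<^sub>R w) + F s - t * c\<bar> \<le> t * b"
proof -
  define \<phi> where "\<phi> r = F (s + t *\<^sub>R v + r *\<^sub>R w) - F (s + r *\<^sub>R w)" for r
  define \<phi>' where "\<phi>' r = frechet_derivative F (at (s + t *\<^sub>R v + r *\<^sub>R w)) w
                           - frechet_derivative F (at (s + r *\<^sub>R w)) w" for r
  have "\<forall>r. 0 \<le> r \<and> r \<le> t \<longrightarrow> (\<phi> has_real_derivative \<phi>' r) (at r)"
    unfolding \<phi>_def \<phi>'_def using differentiable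
    by (auto intro!: DERIV_diff has_real_derivative_along_line)
  then obtain \<xi> where "0 < \<xi>" "\<xi> < t" and "\<phi> t - \<phi> 0 = (t - 0) * \<phi>' \<xi>"
    using MVT2[OF \<open>0 < t\<close>] by blast
  then have "F (s + t *\<^sub>R v + t *\<^sub>R w) - F (s + t *\<^sub>R v) - F (s + t *\<^sub>R w) + F s - t * c
      = t * (\<phi>' \<xi> - c)"
    unfolding \<phi>_def by (simp add: algebra_simps)
  then have "\<bar>F (s + t *\<^sub>R v + t *\<^sub>R w) - F (s + t *\<^sub>R v) - F (s + t *\<^sub>R w) + F s - t * c\<bar>
      = t * \<bar>\<phi>' \<xi> - c\<bar>"
    using \<open>0 < t\<close> by (simp add: abs_mult)
  also have "\<dots> \<le> t * b"
    using bound[of \<xi>] \<open>0 < \<xi>\<close> \<open>\<xi> < t\<close> \<open>0 < t\<close> unfolding \<phi>'_def by simp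
  finally show ?thesis .
qed

lemma norm_scaleR_add_le:
  fixes v w :: "'a::real_normed_vector"
  assumes "0 \<le> a" "a \<le> t" "0 \<le> r" "r \<le> t"
  shows "norm (a *\<^sub>R v + r *\<^sub>R w) \<le> t * (norm v + norm w)"
proof -
  have "norm (a *\<^sub>R v + r *\<^sub>R w) \<le> a * norm v + r * norm w"
    using norm_triangle_ineq[of "a *\<^sub>R v" "r *\<^sub>R w"] assms by simp
  also have "\<dots> \<le> t * (norm v + norm w)"
    using assms by (simp add: distrib_left add_mono mult_right_mono)
  finally show ?thesis .
qed

lemma eventually_at_right_box_in_open:
  fixes s :: "'a::real_normed_vector"
  assumes "open U" "s \<in> U"
  shows "\<forall>\<^sub>F t in at_right 0. \<forall>a r. 0 \<le> a \<and> a \<le> t \<and> 0 \<le> r \<and> r \<le> t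
           \<longrightarrow> s + a *\<^sub>R v + r *\<^sub>R w \<in> U"
proof -
  obtain d where "d > 0" and "ball s d \<subseteq> U"
    using assms open_contains_ball by blast
  define M where "M = norm v + norm w + 1"
  have "M > 0" unfolding M_def by (simp add: add_nonneg_pos)
  have "s + a *\<^sub>R v + r *\<^sub>R w \<in> U"
    if "0 < t" "t < d / M" "0 \<le> a" "a \<le> t" "0 \<le> r" "r \<le> t" for t a r
  proof -
    have "norm (a *\<^sub>R v + r *\<^sub>R w) \<le> t * M"
      using norm_scaleR_add_le[OF that(3-6), of v w] \<open>0 < t\<close> by (simp add: M_def distrib_left)
    also have "\<dots> < d"
      using that(2) \<open>M > 0\<close> by (simp add: pos_less_divide_eq)
    finally have "s + a *\<^sub>R v + r *\<^sub>R w \<in> ball s d"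
      using dist_add_cancel[of s 0 "a *\<^sub>R v + r *\<^sub>R w"] by (simp add: add.assoc)
    then show ?thesis
      using \<open>ball s d \<subseteq> U\<close> by blast
  qed
  then show ?thesis
    unfolding eventually_at_right_field using \<open>d > 0\<close> \<open>M > 0\<close>
    by (intro exI[of _ "d / M"]) auto
qed

lemma eventually_at_right_increment_bound:
  fixes g :: "'a::real_normed_vector \<Rightarrow> real"
  assumes D: "(g has_derivative D) (at s)" and "e > 0"
  shows "\<forall>\<^sub>F t in at_right 0. \<forall>r. 0 \<le> r \<and> r \<le> t
           \<longrightarrow> \<bar>g (s + t *\<^sub>R v + r *\<^sub>R w) - g (s + r *\<^sub>R w) - t * D v\<bar> \<le> e * t"
proof -
  define M where "M = norm v + norm w + 1"
  have "M > 0" unfolding M_def by (simp add: add_nonneg_pos)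
  have "e / (2 * M) > 0"
    using \<open>e > 0\<close> \<open>M > 0\<close> by simp
  then obtain d where "d > 0" and d: "\<And>y. norm (y - s) < d \<Longrightarrow>
      \<bar>g y - g s - D (y - s)\<bar> \<le> e / (2 * M) * norm (y - s)"
    using D unfolding has_derivative_at_alt real_norm_def by blast
  have remainder: "\<bar>g y - g s - D (y - s)\<bar> \<le> e * t / 2"
    if "norm (y - s) \<le> t * M" "t < d / M" for t y
  proof -
    have "t * M < d"
      using that(2) \<open>M > 0\<close> by (simp add: pos_less_divide_eq)
    then have "\<bar>g y - g s - D (y - s)\<bar> \<le> e / (2 * M) * norm (y - s)"
      using d that(1) by simp
    also have "\<dots> \<le> e / (2 * M) * (t * M)"
      using that(1) \<open>e / (2 * M) > 0\<close> by (intro mult_left_mono) auto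
    also have "\<dots> = e * t / 2"
      using \<open>M > 0\<close> by (simp add: field_simps)
    finally show ?thesis .
  qed
  have "\<bar>g (s + t *\<^sub>R v + r *\<^sub>R w) - g (s + r *\<^sub>R w) - t * D v\<bar> \<le> e * t"
    if "0 < t" "t < d / M" "0 \<le> r" "r \<le> t" for t r
  proof -
    have near: "norm (a *\<^sub>R v + r *\<^sub>R w) \<le> t * M" if "0 \<le> a" "a \<le> t" for a
      using norm_scaleR_add_le[OF that \<open>0 \<le> r\<close> \<open>r \<le> t\<close>, of v w] \<open>0 < t\<close>
      by (simp add: M_def distrib_left)
    have "\<bar>g (s + t *\<^sub>R v + r *\<^sub>R w) - g s - D (t *\<^sub>R v + r *\<^sub>R w)\<bar> \<le> e * t / 2"
      using remainder[OF _ \<open>t < d / M\<close>, of "s + t *\<^sub>R v + r *\<^sub>R w"] near[of t] \<open>0 < t\<close>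
      by (simp add: add.assoc)
    moreover have "\<bar>g (s + r *\<^sub>R w) - g s - D (r *\<^sub>R w)\<bar> \<le> e * t / 2"
      using remainder[OF _ \<open>t < d / M\<close>, of "s + r *\<^sub>R w"] near[of 0] \<open>0 < t\<close> by simp
    moreover have "D (t *\<^sub>R v + r *\<^sub>R w) = t * D v + D (r *\<^sub>R w)"
      using has_derivative_linear[OF D] by (simp add: linear_add linear_cmul)
    ultimately show ?thesis by (simp only: abs_le_iff) linarith
  qed
  then show ?thesis
    unfolding eventually_at_right_field using \<open>d > 0\<close> \<open>M > 0\<close>
    by (intro exI[of _ "d / M"]) auto
qed

lemma second_difference_estimate:
  fixes F :: "'a::real_normed_vector \<Rightarrow> real"
  assumes "open U" "s \<in> U" "\<And>p. p \<in> U \<Longrightarrow> F differentiable at p"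
    and D: "((\<lambda>p. frechet_derivative F (at p) w) has_derivative D) (at s)" and "e > 0"
  shows "\<forall>\<^sub>F t in at_right 0.
           \<bar>F (s + t *\<^sub>R v + t *\<^sub>R w) - F (s + t *\<^sub>R v) - F (s + t *\<^sub>R w) + F s - t\<^sup>2 * D v\<bar>
             \<le> e * t\<^sup>2"
  using eventually_at_right_less[of 0] eventually_at_right_box_in_open[OF assms(1,2), of v w]
    eventually_at_right_increment_bound[OF D \<open>e > 0\<close>, of v w]
proof eventually_elim
  case (elim t)
  have "\<bar>F (s + t *\<^sub>R v + t *\<^sub>R w) - F (s + t *\<^sub>R v) - F (s + t *\<^sub>R w) + F s - t * (t * D v)\<bar>
          \<le> t * (e * t)"
  proof (rule second_difference_bound)
    show "F differentiable at (s + t *\<^sub>R v + r *\<^sub>R w) \<and> F differentiable at (s + r *\<^sub>R w)"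
      if "0 \<le> r" "r \<le> t" for r
      using elim(2)[rule_format, of t r] elim(2)[rule_format, of 0 r] elim(1) that assms(3) by simp
  qed (use elim in auto)
  then show ?case
    by (simp add: power2_eq_square mult_ac)
qed

lemma second_derivative_symmetric:
  fixes F :: "'a::real_normed_vector \<Rightarrow> real"
  assumes U: "open U" "s \<in> U" and dF: "\<And>p. p \<in> U \<Longrightarrow> F differentiable at p"
    and Dw: "((\<lambda>p. frechet_derivative F (at p) w) has_derivative Dw) (at s)"
    and Dv: "((\<lambda>p. frechet_derivative F (at p) v) has_derivative Dv) (at s)"
  shows "Dw v = Dv w"
proof -
  have close: "\<bar>Dw v - Dv w\<bar> \<le> 2 * e" if "e > 0" for e
  proof -
    have "\<forall>\<^sub>F t in at_right 0. 0 < t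
        \<and> \<bar>F (s + t *\<^sub>R v + t *\<^sub>R w) - F (s + t *\<^sub>R v) - F (s + t *\<^sub>R w) + F s - t\<^sup>2 * Dw v\<bar> \<le> e * t\<^sup>2
        \<and> \<bar>F (s + t *\<^sub>R w + t *\<^sub>R v) - F (s + t *\<^sub>R w) - F (s + t *\<^sub>R v) + F s - t\<^sup>2 * Dv w\<bar> \<le> e * t\<^sup>2"
      using eventually_at_right_less[of 0] second_difference_estimate[OF U dF Dw \<open>e > 0\<close>, of v]
        second_difference_estimate[OF U dF Dv \<open>e > 0\<close>, of w]
      by (auto intro: eventually_conj)
    then obtain t where "0 < t"
      and est_w: "\<bar>F (s + t *\<^sub>R v + t *\<^sub>R w) - F (s + t *\<^sub>R v) - F (s + t *\<^sub>R w) + F s - t\<^sup>2 * Dw v\<bar> \<le> e * t\<^sup>2"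
      and est_v: "\<bar>F (s + t *\<^sub>R w + t *\<^sub>R v) - F (s + t *\<^sub>R w) - F (s + t *\<^sub>R v) + F s - t\<^sup>2 * Dv w\<bar> \<le> e * t\<^sup>2"
      using eventually_happens'[OF trivial_limit_at_right_real] by blast
    have "s + t *\<^sub>R w + t *\<^sub>R v = s + t *\<^sub>R v + t *\<^sub>R w"
      by (simp add: algebra_simps)
    then have "\<bar>t\<^sup>2 * Dw v - t\<^sup>2 * Dv w\<bar> \<le> 2 * (e * t\<^sup>2)"
      using est_w est_v by (simp only: abs_le_iff) linarith
    moreover have "\<bar>t\<^sup>2 * Dw v - t\<^sup>2 * Dv w\<bar> = t\<^sup>2 * \<bar>Dw v - Dv w\<bar>"
      by (simp add: abs_mult flip: right_diff_distrib)
    ultimately have "t\<^sup>2 * \<bar>Dw v - Dv w\<bar> \<le> t\<^sup>2 * (2 * e)"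
      by (simp add: mult_ac)
    with \<open>0 < t\<close> show ?thesis by simp
  qed
  have "\<bar>Dw v - Dv w\<bar> \<le> 0 + e" if "e > 0" for e
    using close[of "e / 2"] that by simp
  then have "\<bar>Dw v - Dv w\<bar> \<le> 0"
    by (rule field_le_epsilon)
  then show ?thesis by simp
qed

section \<open>Gradient and Hessian\<close>

definition gradient :: "('a::euclidean_space \<Rightarrow> real) \<Rightarrow> 'a \<Rightarrow> 'a" where
  "gradient F p = (\<Sum>b\<in>Basis. frechet_derivative F (at p) b *\<^sub>R b)"

definition hessian :: "('a::euclidean_space \<Rightarrow> real) \<Rightarrow> 'a \<Rightarrow> 'a \<Rightarrow> 'a" where
  "hessian F p = frechet_derivative (gradient F) (at p)"

lemma frechet_derivative_eq_gradient:
  assumes "F differentiable at p"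
  shows "frechet_derivative F (at p) = (\<lambda>u. gradient F p \<bullet> u)"
proof
  fix u
  have lin: "linear (frechet_derivative F (at p))"
    using assms frechet_derivative_works has_derivative_linear by blast
  have "frechet_derivative F (at p) u = frechet_derivative F (at p) (\<Sum>b\<in>Basis. (u \<bullet> b) *\<^sub>R b)"
    by (simp add: euclidean_representation)
  also have "\<dots> = (\<Sum>b\<in>Basis. (u \<bullet> b) * frechet_derivative F (at p) b)"
    by (simp add: linear_sum[OF lin] linear_cmul[OF lin])
  also have "\<dots> = gradient F p \<bullet> u"
    by (simp add: gradient_def inner_sum_left inner_commute[of u] mult.commute)
  finally show "frechet_derivative F (at p) u = gradient F p \<bullet> u" .
qed

lemma has_derivative_gradient_inner:
  assumes "F differentiable at p"
  shows "(F has_derivative (\<lambda>u. gradient F p \<bullet> u)) (at p)"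
  using assms frechet_derivative_works frechet_derivative_eq_gradient by metis

lemma gradient_differentiable_at:
  assumes "\<And>b. b \<in> Basis \<Longrightarrow> (\<lambda>x. frechet_derivative F (at x) b) differentiable at p"
  shows "gradient F differentiable at p"
  unfolding gradient_def[abs_def] using assms by (intro differentiable_sum ballI differentiable_scaleR) auto

lemma has_derivative_directional_derivative:
  assumes "open U" "p \<in> U" "\<And>x. x \<in> U \<Longrightarrow> F differentiable at x"
    and "gradient F differentiable at p"
  shows "((\<lambda>x. frechet_derivative F (at x) w) has_derivative (\<lambda>v. hessian F p v \<bullet> w)) (at p)"
proof (rule has_derivative_transform_within_open[OF _ \<open>open U\<close> \<open>p \<in> U\<close>])
  show "((\<lambda>x. gradient F x \<bullet> w) has_derivative (\<lambda>v. hessian F p v \<bullet> w)) (at p)"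
    using assms(4) unfolding hessian_def frechet_derivative_works
    by (rule has_derivative_inner_left)
  show "gradient F x \<bullet> w = frechet_derivative F (at x) w" if "x \<in> U" for x
    using frechet_derivative_eq_gradient[OF assms(3)[OF that]] by simp
qed

lemma hessian_symmetric:
  assumes "open U" "p \<in> U" "\<And>x. x \<in> U \<Longrightarrow> F differentiable at x"
    and "gradient F differentiable at p"
  shows "hessian F p v \<bullet> w = hessian F p w \<bullet> v"
  using second_derivative_symmetric[OF assms(1-3)
      has_derivative_directional_derivative[OF assms] has_derivative_directional_derivative[OF assms]] .

lemma gradient_affine: "gradient (\<lambda>x. d + L \<bullet> x) = (\<lambda>p. L)"
proof
  fix p
  have "((\<lambda>x. d + L \<bullet> x) has_derivative (\<lambda>u. L \<bullet> u)) (at p)"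
    by (auto intro!: derivative_eq_intros)
  then show "gradient (\<lambda>x. d + L \<bullet> x) p = L"
    by (simp add: gradient_def frechet_derivative_at[symmetric] euclidean_representation)
qed

lemma hessian_affine: "hessian (\<lambda>x. d + L \<bullet> x) p = (\<lambda>u. 0)"
  unfolding hessian_def gradient_affine
  by (rule frechet_derivative_at[symmetric]) (rule has_derivative_const)

section \<open>Cross products and the area form on the unit sphere\<close>

lemma vector_triple_product: "cross3 a (cross3 b c) = (a \<bullet> c) *\<^sub>R b - (a \<bullet> b) *\<^sub>R c"
  by (simp add: cross3_simps forall_3)

lemma tangential_part_eq_cross_cross:
  assumes "norm s = 1"
  shows "y - (s \<bullet> y) *\<^sub>R s = - cross3 s (cross3 s y)"
  using assms by (simp add: vector_triple_product norm_eq_1)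

lemma tangential_part_cross_sum:
  assumes "norm s = 1" "v \<in> tangent_space s"
  shows "(cross3 g v + cross3 a s) - (s \<bullet> (cross3 g v + cross3 a s)) *\<^sub>R s
           = cross3 a s + (g \<bullet> s) *\<^sub>R cross3 s v"
proof -
  have "(cross3 g v + cross3 a s) - (s \<bullet> (cross3 g v + cross3 a s)) *\<^sub>R s
          = - cross3 s (cross3 s (cross3 g v + cross3 a s))"
    by (rule tangential_part_eq_cross_cross[OF assms(1)])
  also have "cross3 s (cross3 g v + cross3 a s) = a - (s \<bullet> a) *\<^sub>R s - (s \<bullet> g) *\<^sub>R v"
    using assms by (simp add: cross_add_right vector_triple_product norm_eq_1 tangent_space_def)
  also have "- cross3 s (a - (s \<bullet> a) *\<^sub>R s - (s \<bullet> g) *\<^sub>R v) = cross3 a s + (g \<bullet> s) *\<^sub>R cross3 s v"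
    by (simp add: Cross3.right_diff_distrib cross_mult_right cross_skew[of s a] inner_commute)
  finally show ?thesis .
qed

lemma normal_if_orthogonal_tangent_space:
  assumes "norm s = 1" and "\<And>w. w \<in> tangent_space s \<Longrightarrow> y \<bullet> w = 0"
  shows "y = (s \<bullet> y) *\<^sub>R s"
proof -
  define z where "z = y - (s \<bullet> y) *\<^sub>R s"
  have "z \<in> tangent_space s"
    using assms(1) unfolding z_def tangent_space_def by (simp add: inner_diff_right norm_eq_1)
  then have "z \<bullet> z = 0"
    using assms(2) unfolding z_def tangent_space_def by (simp add: inner_diff_left)
  then show ?thesis unfolding z_def by simp
qed

lemma exists_nonzero_tangent:
  fixes s :: "real^3"
  assumes "s \<noteq> 0"
  obtains v where "v \<in> tangent_space s" "v \<noteq> 0"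
  using cross_basis_nonzero[OF assms] dot_cross_self(1)[of s]
  unfolding tangent_space_def by blast

lemma area_form_cross_left:
  assumes "norm p = 1" "v \<in> tangent_space p"
  shows "p \<bullet> cross3 (cross3 g p) v = g \<bullet> v"
  using assms unfolding tangent_space_def
  by (simp add: cross_skew[of "cross3 g p" v] vector_triple_product norm_eq_1 inner_commute)

lemma area_form_nondegenerate:
  assumes "norm p = 1" "y \<in> tangent_space p"
    and "\<And>v. v \<in> tangent_space p \<Longrightarrow> p \<bullet> cross3 y v = 0"
  shows "y = 0"
proof -
  have "p \<bullet> cross3 y (cross3 p y) = 0"
    using assms(3) by (simp add: tangent_space_def dot_cross_self)
  then have "y \<bullet> y = 0"
    using assms(1,2) by (simp add: tangent_space_def vector_triple_product norm_eq_1 inner_commute)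
  then show ?thesis by simp
qed

lemma hamiltonian_vf_eq_cross_gradient:
  assumes "p \<in> sphere 0 1" and "F differentiable at p"
  shows "hamiltonian_vf F p = cross3 (gradient F p) p"
  unfolding hamiltonian_vf_def
proof (rule the_equality)
  have p: "norm p = 1" using assms(1) by simp
  have dF: "frechet_derivative F (at p) v = gradient F p \<bullet> v" for v
    by (simp add: frechet_derivative_eq_gradient[OF assms(2)])
  show "cross3 (gradient F p) p \<in> tangent_space p \<and>
    (\<forall>v\<in>tangent_space p. p \<bullet> cross3 (cross3 (gradient F p) p) v = frechet_derivative F (at p) v)"
    by (simp add: tangent_space_def dot_cross_self area_form_cross_left[OF p] dF)
  fix X assume X: "X \<in> tangent_space p \<and>
    (\<forall>v\<in>tangent_space p. p \<bullet> cross3 X v = frechet_derivative F (at p) v)"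
  have "X - cross3 (gradient F p) p = 0"
  proof (rule area_form_nondegenerate[OF p])
    show "X - cross3 (gradient F p) p \<in> tangent_space p"
      using X by (simp add: tangent_space_def inner_diff_right dot_cross_self)
    show "p \<bullet> cross3 (X - cross3 (gradient F p) p) v = 0" if "v \<in> tangent_space p" for v
      using X that by (simp add: Cross3.left_diff_distrib inner_diff_right area_form_cross_left[OF p] dF)
  qed
  then show "X = cross3 (gradient F p) p" by simp
qed

lemma symmetric_imp_no_rotation_part:
  fixes s :: "real^3" and h :: "real^3 \<Rightarrow> real^3"
  assumes s: "norm s = 1"
    and sym: "\<And>v w. v \<in> tangent_space s \<Longrightarrow> w \<in> tangent_space s \<Longrightarrow> h v \<bullet> w = h w \<bullet> v"
    and h: "\<And>v w. v \<in> tangent_space s \<Longrightarrow> w \<in> tangent_space s \<Longrightarrow>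
              h v \<bullet> w = l * (cross3 s v \<bullet> w) + m * (v \<bullet> w)"
  shows "l = 0"
proof -
  have "s \<noteq> 0" using s by auto
  then obtain v where v: "v \<in> tangent_space s" "v \<noteq> 0"
    by (rule exists_nonzero_tangent)
  define w where "w = cross3 s v"
  have w: "w \<in> tangent_space s" and "v \<bullet> w = 0"
    unfolding w_def tangent_space_def by (simp_all add: dot_cross_self)
  have "w \<bullet> w = v \<bullet> v"
    using norm_cross_dot[of s v] s v(1) unfolding w_def tangent_space_def
    by (simp add: power2_norm_eq_inner)
  moreover have "cross3 s w = - v"
    using s v(1) unfolding w_def tangent_space_def by (simp add: vector_triple_product norm_eq_1)
  ultimately have "l * (v \<bullet> v) = - l * (v \<bullet> v)"
    using sym[OF v(1) w] h[OF v(1) w] h[OF w v(1)] \<open>v \<bullet> w = 0\<close>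
    by (simp add: w_def inner_commute)
  with v(2) show "l = 0" by simp
qed

lemma cross_similarity_iff_isotropic:
  fixes s :: "real^3" and h :: "real^3 \<Rightarrow> real^3"
  assumes s: "norm s = 1"
    and sym: "\<And>v w. v \<in> tangent_space s \<Longrightarrow> w \<in> tangent_space s \<Longrightarrow> h v \<bullet> w = h w \<bullet> v"
  shows "(\<exists>l m. \<forall>v\<in>tangent_space s. cross3 (h v) s = l *\<^sub>R v + m *\<^sub>R cross3 s v)
     \<longleftrightarrow> (\<exists>k. \<forall>v\<in>tangent_space s. \<forall>w\<in>tangent_space s. h v \<bullet> w = k * (v \<bullet> w))"
proof
  assume "\<exists>l m. \<forall>v\<in>tangent_space s. cross3 (h v) s = l *\<^sub>R v + m *\<^sub>R cross3 s v"
  then obtain l m where lm: "\<And>v. v \<in> tangent_space s \<Longrightarrow> cross3 (h v) s = l *\<^sub>R v + m *\<^sub>R cross3 s v"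
    by blast
  have h: "h v \<bullet> w = l * (cross3 s v \<bullet> w) + (- m) * (v \<bullet> w)"
    if "v \<in> tangent_space s" "w \<in> tangent_space s" for v w
  proof -
    have "h v - (s \<bullet> h v) *\<^sub>R s = cross3 s (cross3 (h v) s)"
      using s by (simp add: vector_triple_product norm_eq_1)
    also have "\<dots> = l *\<^sub>R cross3 s v - m *\<^sub>R v"
      using lm[OF that(1)] that(1) s unfolding tangent_space_def
      by (simp add: cross_add_right cross_mult_right vector_triple_product norm_eq_1)
    finally have "(h v - (s \<bullet> h v) *\<^sub>R s) \<bullet> w = (l *\<^sub>R cross3 s v - m *\<^sub>R v) \<bullet> w"
      by simp
    then show ?thesis
      using that(2) unfolding tangent_space_def by (simp add: inner_diff_left)
  qed
  then show "\<exists>k. \<forall>v\<in>tangent_space s. \<forall>w\<in>tangent_space s. h v \<bullet> w = k * (v \<bullet> w)"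
    using symmetric_imp_no_rotation_part[OF s sym h] by (intro exI[of _ "- m"]) auto
next
  assume "\<exists>k. \<forall>v\<in>tangent_space s. \<forall>w\<in>tangent_space s. h v \<bullet> w = k * (v \<bullet> w)"
  then obtain k where k: "\<And>v w. v \<in> tangent_space s \<Longrightarrow> w \<in> tangent_space s \<Longrightarrow> h v \<bullet> w = k * (v \<bullet> w)"
    by blast
  have "cross3 (h v) s = 0 *\<^sub>R v + (- k) *\<^sub>R cross3 s v" if "v \<in> tangent_space s" for v
  proof -
    have "h v - k *\<^sub>R v = (s \<bullet> (h v - k *\<^sub>R v)) *\<^sub>R s"
      using k[OF that] by (intro normal_if_orthogonal_tangent_space[OF s]) (simp add: inner_diff_left)
    then obtain c where "h v = k *\<^sub>R v + c *\<^sub>R s"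
      by (metis diff_add_cancel add.commute)
    then show ?thesis
      by (simp add: cross_add_left cross_mult_left cross_skew[of v s])
  qed
  then show "\<exists>l m. \<forall>v\<in>tangent_space s. cross3 (h v) s = l *\<^sub>R v + m *\<^sub>R cross3 s v"
    by blast
qed

section \<open>The standard chart of the sphere\<close>

lemma has_derivative_norm_add:
  fixes s :: "'a::real_inner"
  assumes "s + x \<noteq> 0"
  shows "((\<lambda>x. norm (s + x)) has_derivative (\<lambda>v. (s + x) \<bullet> v / norm (s + x))) (at x)"
  using has_derivative_compose[OF has_derivative_add[OF has_derivative_const has_derivative_ident]
      has_derivative_norm[OF assms]]
  by (simp add: sgn_div_norm inner_commute divide_inverse_commute)

definition sphere_chart_deriv :: "real^3 \<Rightarrow> real^3 \<Rightarrow> real^3 \<Rightarrow> real^3" where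
  "sphere_chart_deriv s x v =
     v /\<^sub>R norm (s + x) - (((s + x) \<bullet> v) / norm (s + x) ^ 3) *\<^sub>R (s + x)"

lemma has_derivative_sphere_chart:
  assumes "s + x \<noteq> 0"
  shows "(sphere_chart s has_derivative sphere_chart_deriv s x) (at x)"
  unfolding sphere_chart_def[abs_def] sphere_chart_deriv_def[abs_def] using assms
  by (auto intro!: derivative_eq_intros has_derivative_norm_add
      simp: fun_eq_iff power3_eq_cube divide_inverse)

lemma has_derivative_sphere_chart_deriv:
  assumes "norm s = 1" "v \<in> tangent_space s"
  shows "((\<lambda>x. sphere_chart_deriv s x v) has_derivative
           (\<lambda>w. - ((s \<bullet> w) *\<^sub>R v + (w \<bullet> v) *\<^sub>R s))) (at 0)"
  unfolding sphere_chart_deriv_def using assms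
  by (auto intro!: derivative_eq_intros has_derivative_norm_add simp: fun_eq_iff tangent_space_def)

lemma sphere_chart_deriv_zero:
  "norm s = 1 \<Longrightarrow> v \<in> tangent_space s \<Longrightarrow> sphere_chart_deriv s 0 v = v"
  by (simp add: sphere_chart_deriv_def tangent_space_def)

lemma sphere_chart_zero: "norm s = 1 \<Longrightarrow> sphere_chart s 0 = s"
  by (simp add: sphere_chart_def)

lemma add_nonzero_if_norm_less:
  fixes s :: "'a::real_normed_vector"
  assumes "norm s = 1" "norm x < 1"
  shows "s + x \<noteq> 0"
  using assms by (metis add_eq_0_iff2 norm_minus_cancel less_irrefl)

lemma sphere_chart_in_sphere:
  assumes "norm s = 1" "norm x < 1"
  shows "sphere_chart s x \<in> sphere 0 1"
  using add_nonzero_if_norm_less[OF assms] by (simp add: sphere_chart_def)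

section \<open>Jets and covariant derivatives at a point of the sphere\<close>

locale sphere_point_twice_differentiable =
  fixes F :: "real^3 \<Rightarrow> real" and U :: "(real^3) set" and s :: "real^3"
  assumes open_U: "open U" and sphere_subset_U: "sphere 0 1 \<subseteq> U" and norm_s: "norm s = 1"
    and differentiable_F: "\<And>p. p \<in> U \<Longrightarrow> F differentiable at p"
    and gradient_differentiable: "gradient F differentiable at s"
begin

lemma s_in_U: "s \<in> U"
  using norm_s sphere_subset_U by auto

lemma has_derivative_sphere_chart_at:
  "norm x < 1 \<Longrightarrow> (sphere_chart s has_derivative sphere_chart_deriv s x) (at x)"
  using has_derivative_sphere_chart add_nonzero_if_norm_less[OF norm_s] by blast

lemma has_derivative_gradient: "(gradient F has_derivative hessian F s) (at s)"
  using gradient_differentiable unfolding hessian_def frechet_derivative_works .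

lemma has_derivative_gradient_sphere_chart:
  "((\<lambda>x. gradient F (sphere_chart s x)) has_derivative
     (\<lambda>u. hessian F s (sphere_chart_deriv s 0 u))) (at 0)"
proof -
  have "(sphere_chart s has_derivative sphere_chart_deriv s 0) (at 0)"
    using has_derivative_sphere_chart_at by simp
  moreover have "(gradient F has_derivative hessian F s) (at (sphere_chart s 0))"
    using has_derivative_gradient norm_s by (simp add: sphere_chart_zero)
  ultimately show ?thesis
    using diff_chain_at unfolding o_def by blast
qed

lemma has_derivative_comp_sphere_chart:
  assumes "norm x < 1"
  shows "((F \<circ> sphere_chart s) has_derivative
           (\<lambda>u. gradient F (sphere_chart s x) \<bullet> sphere_chart_deriv s x u)) (at x)"
proof -
  have "sphere_chart s x \<in> U"
    using sphere_chart_in_sphere[OF norm_s assms] sphere_subset_U by blast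
  then show ?thesis
    using diff_chain_at[OF has_derivative_sphere_chart_at[OF assms]
        has_derivative_gradient_inner[OF differentiable_F]] by (simp add: o_def)
qed

lemma sphere_chart_jet0: "(F \<circ> sphere_chart s) 0 = F s"
  using norm_s by (simp add: sphere_chart_zero)

lemma sphere_chart_jet1:
  assumes "v \<in> tangent_space s"
  shows "iter_dd [v] (F \<circ> sphere_chart s) 0 = gradient F s \<bullet> v"
  using frechet_derivative_at[OF has_derivative_comp_sphere_chart[of 0], symmetric] assms norm_s
  by (simp add: sphere_chart_zero sphere_chart_deriv_zero)

lemma sphere_chart_jet2:
  assumes v: "v \<in> tangent_space s" and w: "w \<in> tangent_space s"
  shows "iter_dd [w, v] (F \<circ> sphere_chart s) 0
           = hessian F s w \<bullet> v - (w \<bullet> v) * (gradient F s \<bullet> s)"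
proof -
  have "((\<lambda>x. gradient F (sphere_chart s x) \<bullet> sphere_chart_deriv s x v) has_derivative
         (\<lambda>u. gradient F (sphere_chart s 0) \<bullet> - ((s \<bullet> u) *\<^sub>R v + (u \<bullet> v) *\<^sub>R s)
              + hessian F s (sphere_chart_deriv s 0 u) \<bullet> sphere_chart_deriv s 0 v)) (at 0)"
    by (intro has_derivative_inner has_derivative_gradient_sphere_chart
        has_derivative_sphere_chart_deriv[OF norm_s v])
  then have "((\<lambda>x. frechet_derivative (F \<circ> sphere_chart s) (at x) v) has_derivative
         (\<lambda>u. gradient F (sphere_chart s 0) \<bullet> - ((s \<bullet> u) *\<^sub>R v + (u \<bullet> v) *\<^sub>R s)
              + hessian F s (sphere_chart_deriv s 0 u) \<bullet> sphere_chart_deriv s 0 v)) (at 0)"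
    by (rule has_derivative_transform_within_open[OF _ open_ball[of 0 1]])
      (auto simp: frechet_derivative_at[OF has_derivative_comp_sphere_chart, symmetric])
  then show ?thesis
    using frechet_derivative_at[symmetric] v w norm_s
    by (fastforce simp: sphere_chart_zero sphere_chart_deriv_zero tangent_space_def inner_commute)
qed

lemma covariant_deriv_hamiltonian_vf:
  assumes v: "v \<in> tangent_space s"
  shows "covariant_deriv (hamiltonian_vf F) s v
           = cross3 (hessian F s v) s + (gradient F s \<bullet> s) *\<^sub>R cross3 s v"
proof -
  have "bounded_bilinear cross3"
    using bilinear_cross bilinear_conv_bounded_bilinear by blast
  then have "((\<lambda>x. cross3 (gradient F (sphere_chart s x)) (sphere_chart s x)) has_derivative
      (\<lambda>u. cross3 (gradient F (sphere_chart s 0)) (sphere_chart_deriv s 0 u)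
           + cross3 (hessian F s (sphere_chart_deriv s 0 u)) (sphere_chart s 0))) (at 0)"
    using has_derivative_sphere_chart_at[of 0]
    by (intro bounded_bilinear.FDERIV has_derivative_gradient_sphere_chart) simp_all
  then have "((hamiltonian_vf F \<circ> sphere_chart s) has_derivative
      (\<lambda>u. cross3 (gradient F (sphere_chart s 0)) (sphere_chart_deriv s 0 u)
           + cross3 (hessian F s (sphere_chart_deriv s 0 u)) (sphere_chart s 0))) (at 0)"
  proof (rule has_derivative_transform_within_open[OF _ open_ball[of 0 1]])
    fix x :: "real^3" assume "x \<in> ball 0 1"
    then have "sphere_chart s x \<in> sphere 0 1"
      using sphere_chart_in_sphere[OF norm_s] by simp
    then show "cross3 (gradient F (sphere_chart s x)) (sphere_chart s x)
               = (hamiltonian_vf F \<circ> sphere_chart s) x"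
      using hamiltonian_vf_eq_cross_gradient differentiable_F sphere_subset_U by auto
  qed simp
  then have "frechet_derivative (hamiltonian_vf F \<circ> sphere_chart s) (at 0) v
               = cross3 (gradient F s) v + cross3 (hessian F s v) s"
    using frechet_derivative_at[symmetric] v norm_s
    by (fastforce simp: sphere_chart_zero sphere_chart_deriv_zero)
  then show ?thesis
    using tangential_part_cross_sum[OF norm_s v] unfolding covariant_deriv_def Let_def by simp
qed

lemma conformal_point_iff_isotropic_hessian:
  "conformal_point (hamiltonian_vf F) s
     \<longleftrightarrow> (\<exists>k. \<forall>v\<in>tangent_space s. \<forall>w\<in>tangent_space s. hessian F s v \<bullet> w = k * (v \<bullet> w))"
proof -
  let ?c = "gradient F s \<bullet> s"
  have shift: "(\<forall>v\<in>tangent_space s. covariant_deriv (hamiltonian_vf F) s v = l *\<^sub>R v + m *\<^sub>R cross3 s v)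
      \<longleftrightarrow> (\<forall>v\<in>tangent_space s. cross3 (hessian F s v) s = l *\<^sub>R v + (m - ?c) *\<^sub>R cross3 s v)" for l m
    by (simp add: covariant_deriv_hamiltonian_vf algebra_simps)
  have "conformal_point (hamiltonian_vf F) s
      \<longleftrightarrow> (\<exists>l m. \<forall>v\<in>tangent_space s. cross3 (hessian F s v) s = l *\<^sub>R v + m *\<^sub>R cross3 s v)"
    unfolding conformal_point_def shift by (metis add_diff_cancel_right')
  also have "\<dots> \<longleftrightarrow> (\<exists>k. \<forall>v\<in>tangent_space s. \<forall>w\<in>tangent_space s. hessian F s v \<bullet> w = k * (v \<bullet> w))"
    using cross_similarity_iff_isotropic[OF norm_s]
      hessian_symmetric[OF open_U s_in_U differentiable_F gradient_differentiable] by blast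
  finally show ?thesis .
qed

end

lemma jet2_eq_iff_gradient_hessian:
  assumes F: "sphere_point_twice_differentiable F U s"
    and G: "sphere_point_twice_differentiable G V s"
  shows "jet2_eq s F G \<longleftrightarrow> F s = G s
    \<and> (\<forall>v\<in>tangent_space s. gradient F s \<bullet> v = gradient G s \<bullet> v)
    \<and> (\<forall>v\<in>tangent_space s. \<forall>w\<in>tangent_space s.
         hessian F s w \<bullet> v - (w \<bullet> v) * (gradient F s \<bullet> s)
           = hessian G s w \<bullet> v - (w \<bullet> v) * (gradient G s \<bullet> s))"
  unfolding jet2_eq_def Let_def
  by (simp del: iter_dd.simps comp_apply add: sphere_point_twice_differentiable.sphere_chart_jet0[OF F]
      sphere_point_twice_differentiable.sphere_chart_jet0[OF G]
      sphere_point_twice_differentiable.sphere_chart_jet1[OF F]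
      sphere_point_twice_differentiable.sphere_chart_jet1[OF G]
      sphere_point_twice_differentiable.sphere_chart_jet2[OF F]
      sphere_point_twice_differentiable.sphere_chart_jet2[OF G])

lemma sphere_point_twice_differentiable_affine:
  assumes "norm s = 1"
  shows "sphere_point_twice_differentiable (\<lambda>x. d + L \<bullet> x) UNIV s"
  using assms by unfold_locales (auto simp: gradient_affine intro!: derivative_eq_intros)

context sphere_point_twice_differentiable
begin

lemma jet2_eq_affine_iff:
  "jet2_eq s F (\<lambda>x. d + L \<bullet> x) \<longleftrightarrow> F s = d + L \<bullet> s
    \<and> (\<forall>v\<in>tangent_space s. gradient F s \<bullet> v = L \<bullet> v)
    \<and> (\<forall>v\<in>tangent_space s. \<forall>w\<in>tangent_space s.
         hessian F s w \<bullet> v = (w \<bullet> v) * (gradient F s \<bullet> s - L \<bullet> s))"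
  unfolding jet2_eq_iff_gradient_hessian[OF sphere_point_twice_differentiable_axioms
      sphere_point_twice_differentiable_affine[OF norm_s]]
  by (simp add: gradient_affine hessian_affine algebra_simps)

lemma exists_affine_jet_iff_isotropic_hessian:
  "(\<exists>L d. jet2_eq s F (\<lambda>x. d + L \<bullet> x))
     \<longleftrightarrow> (\<exists>k. \<forall>v\<in>tangent_space s. \<forall>w\<in>tangent_space s. hessian F s v \<bullet> w = k * (v \<bullet> w))"
proof
  assume "\<exists>L d. jet2_eq s F (\<lambda>x. d + L \<bullet> x)"
  then obtain L where "\<forall>v\<in>tangent_space s. \<forall>w\<in>tangent_space s.
      hessian F s v \<bullet> w = (v \<bullet> w) * (gradient F s \<bullet> s - L \<bullet> s)"
    unfolding jet2_eq_affine_iff by blast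
  then show "\<exists>k. \<forall>v\<in>tangent_space s. \<forall>w\<in>tangent_space s. hessian F s v \<bullet> w = k * (v \<bullet> w)"
    by (metis mult.commute)
next
  assume "\<exists>k. \<forall>v\<in>tangent_space s. \<forall>w\<in>tangent_space s. hessian F s v \<bullet> w = k * (v \<bullet> w)"
  then obtain k where k: "\<forall>v\<in>tangent_space s. \<forall>w\<in>tangent_space s. hessian F s v \<bullet> w = k * (v \<bullet> w)"
    by blast
  define L where "L = gradient F s - k *\<^sub>R s"
  have "jet2_eq s F (\<lambda>x. (F s - L \<bullet> s) + L \<bullet> x)"
    unfolding jet2_eq_affine_iff using k norm_s
    by (simp add: L_def tangent_space_def inner_diff_left inner_diff_right norm_eq_1 inner_commute)
  then show "\<exists>L d. jet2_eq s F (\<lambda>x. d + L \<bullet> x)" by blast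
qed

end

lemma smooth_on_imp_sphere_point_twice_differentiable:
  assumes "smooth_on U H" "sphere 0 1 \<subseteq> U" "s \<in> sphere 0 1"
  shows "sphere_point_twice_differentiable H U s"
proof
  show "open U" "sphere 0 1 \<subseteq> U" "norm s = 1"
    using assms unfolding smooth_on_def by auto
  have iter: "iter_dd vs H differentiable at p" if "p \<in> U" for vs p
    using assms(1) that unfolding smooth_on_def by (auto simp: differentiable_on_eq_differentiable_at)
  show "H differentiable at p" if "p \<in> U" for p
    using iter[OF that, of "[]"] by simp
  show "gradient H differentiable at s"
    using iter[of s "[_]"] assms(2,3) by (intro gradient_differentiable_at) auto
qed

lemma inner_real3: "(u::real^3) \<bullet> x = u$1 * x$1 + u$2 * x$2 + u$3 * x$3"
  by (simp add: inner_vec_def sum_3)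

theorem lemma5:
  fixes H :: "real^3 \<Rightarrow> real" and U :: "(real^3) set" and s :: "real^3"
  assumes "smooth_on U H" and "sphere 0 1 \<subseteq> U" and "s \<in> sphere 0 1"
  shows "conformal_point (hamiltonian_vf H) s \<longleftrightarrow>
         (\<exists>a b c d :: real. jet2_eq s H (\<lambda>x. d + a * x$1 + b * x$2 + c * x$3))"
proof -
  interpret sphere_point_twice_differentiable H U s
    using smooth_on_imp_sphere_point_twice_differentiable[OF assms] .
  have "(\<exists>a b c d. jet2_eq s H (\<lambda>x. d + a * x$1 + b * x$2 + c * x$3))
          \<longleftrightarrow> (\<exists>L d. jet2_eq s H (\<lambda>x. d + L \<bullet> x))"
  proof
    assume "\<exists>a b c d. jet2_eq s H (\<lambda>x. d + a * x$1 + b * x$2 + c * x$3)"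
    then obtain a b c d where "jet2_eq s H (\<lambda>x. d + vector [a, b, c] \<bullet> x)"
      by (auto simp: inner_real3 add.assoc)
    then show "\<exists>L d. jet2_eq s H (\<lambda>x. d + L \<bullet> x)" by blast
  qed (auto simp: inner_real3 add.assoc)
  then show ?thesis
    by (simp add: conformal_point_iff_isotropic_hessian exists_affine_jet_iff_isotropic_hessian)
qed

end
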